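(* Let $m \ge 1$ and let $A_1,\dots,A_m$ be $d$-dimensional boxes forming a set of Gozinta Boxes, i.e. both the natural order $A_1,A_2,\dots,A_m$ and the reverse order $A_m,\dots,A_1$ (listed from innermost to outermost) are possible arrangements. Fix states of the boxes realizing these two arrangements. Then at least $m-1$ of the boxes are, in at least one of the two arrangements, expanded along their smallest side (a side whose closed length is the minimum closed side length of that box).
   Context: A $d$-dimensional box $A$ has closed side lengths $a_1\le a_2\le\dots\le a_d$ (positive reals). A state of $A$ is either closed (side lengths $a_1,\dots,a_d$) or expanded along one side $i$: the side $a_i$ is replaced by a length $a_i'$ with $a_i\le a_i'\le 2a_i$ (expansion bound), all other sides unchanged; only one side can expand. The dimension vector of a state is its multiset of side lengths sorted in non-decreasing order. A box $X$ in some state fits inside a box $Y$ in some state if every coordinate of the dimension vector of $Y$ is strictly larger than the corresponding coordinate of the dimension vector of $X$. An order $X_1,\dots,X_k$ (innermost to outermost) of a collection of boxes is a possible arrangement if each box can be assigned a state so that $X_j$ fits inside $X_{j+1}$ for all $j$; a box may be in different states in different arrangements. *)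

theory Defs
  imports Complex_Main
begin

text \<open>A d-dimensional box is given by the list of its closed side lengths
  a_1 \<le> ... \<le> a_d (positive reals).\<close>
definition is_box :: "nat \<Rightarrow> real list \<Rightarrow> bool" where
  "is_box d a \<longleftrightarrow> length a = d \<and> sorted a \<and> (\<forall>x\<in>set a. x > 0)"

text \<open>A state: None = closed; Some (i, l) = expanded along side i (0-based)
  with new length l.\<close>
type_synonym box_state = "(nat \<times> real) option"

definition valid_state :: "real list \<Rightarrow> box_state \<Rightarrow> bool" where
  "valid_state a st = (case st of None \<Rightarrow> True
     | Some (i, l) \<Rightarrow> i < length a \<and> a ! i \<le> l \<and> l \<le> 2 * a ! i)"

definition dimvec :: "real list \<Rightarrow> box_state \<Rightarrow> real list" where
  "dimvec a st = (case st of None \<Rightarrow> sort a | Some (i, l) \<Rightarrow> sort (a[i := l]))"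

definition fits_in :: "real list \<Rightarrow> box_state \<Rightarrow> real list \<Rightarrow> box_state \<Rightarrow> bool" where
  "fits_in a s b t \<longleftrightarrow> length (dimvec a s) = length (dimvec b t) \<and>
     (\<forall>k < length (dimvec a s). dimvec a s ! k < dimvec b t ! k)"

definition expanded_smallest :: "real list \<Rightarrow> box_state \<Rightarrow> bool" where
  "expanded_smallest a st \<longleftrightarrow> (\<exists>i l. st = Some (i, l) \<and> i < length a \<and> a ! i = Min (set a))"

end

theory Submission
  imports Defs
begin

text \<open>The first coordinate of a dimension vector is the smallest current side length.
  Unless a box is expanded along a smallest side, this is its smallest closed side
  length, because expansion never shrinks a side. If two boxes \<open>j < k\<close> were expanded
  along a smallest side in neither arrangement, the arrangement \<open>A\<^sub>1, \<dots>, A\<^sub>m\<close> would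
  force \<open>min A\<^sub>j < min A\<^sub>k\<close> and the reverse arrangement \<open>min A\<^sub>k < min A\<^sub>j\<close>. So at most
  one box is exceptional.\<close>

lemma sort_nth_0_eq_Min:
  fixes xs :: "'a::linorder list"
  assumes "xs \<noteq> []"
  shows "sort xs ! 0 = Min (set xs)"
proof (rule Min_eqI[symmetric])
  show "finite (set xs)" by simp
  show "sort xs ! 0 \<in> set xs"
    using assms by (metis length_greater_0_conv length_sort nth_mem set_sort)
  fix x assume "x \<in> set xs"
  then obtain k where "k < length (sort xs)" "sort xs ! k = x"
    by (metis in_set_conv_nth set_sort)
  then show "sort xs ! 0 \<le> x"
    using sorted_nth_mono[OF sorted_sort, of 0 k xs] by simp
qed

lemma Min_set_list_update_ge:
  fixes xs :: "'a::linorder list"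
  assumes "i < length xs" and "xs ! i \<noteq> Min (set xs)" and "xs ! i \<le> y"
  shows "Min (set (xs[i := y])) = Min (set xs)"
proof (rule Min_eqI)
  have "Min (set xs) \<in> set xs" using assms(1) by (intro Min_in) auto
  then obtain k where k: "k < length xs" "xs ! k = Min (set xs)"
    by (auto simp: in_set_conv_nth)
  moreover from assms(2) k(2) have "k \<noteq> i" by auto
  ultimately have "xs[i := y] ! k = Min (set xs)" by simp
  with k(1) show "Min (set xs) \<in> set (xs[i := y])"
    by (metis length_list_update nth_mem)
  have "Min (set xs) \<le> xs ! i" using assms(1) by simp
  then have "Min (set xs) \<le> y" using assms(3) by (rule order_trans)
  fix z assume "z \<in> set (xs[i := y])"
  then have "z = y \<or> z \<in> set xs" using set_update_subset_insert by fastforce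
  then show "Min (set xs) \<le> z" using \<open>Min (set xs) \<le> y\<close> by (elim disjE) simp_all
qed simp

lemma length_dimvec: "length (dimvec a st) = length a"
  by (auto simp: dimvec_def split: option.splits)

lemma dimvec_nth_0_eq_Min:
  assumes "a \<noteq> []" and "valid_state a st" and "\<not> expanded_smallest a st"
  shows "dimvec a st ! 0 = Min (set a)"
proof (cases st)
  case None
  then show ?thesis using assms(1) by (simp add: dimvec_def sort_nth_0_eq_Min)
next
  case (Some p)
  then obtain i l where st: "st = Some (i, l)" by (cases p) auto
  with assms(2,3) have "i < length a" "a ! i \<le> l" "a ! i \<noteq> Min (set a)"
    by (auto simp: valid_state_def expanded_smallest_def)
  then show ?thesis
    using st assms(1) by (simp add: dimvec_def sort_nth_0_eq_Min Min_set_list_update_ge)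
qed

lemma Min_less_Min_if_nth_0_dimvec_less:
  assumes "a \<noteq> []" and "valid_state a s" and "\<not> expanded_smallest a s"
    and "b \<noteq> []" and "valid_state b t" and "\<not> expanded_smallest b t"
    and "dimvec a s ! 0 < dimvec b t ! 0"
  shows "Min (set a) < Min (set b)"
  using assms by (simp add: dimvec_nth_0_eq_Min)

lemma fits_in_nth_0_less:
  assumes "fits_in a s b t" and "a \<noteq> []"
  shows "dimvec a s ! 0 < dimvec b t ! 0"
proof -
  have "0 < length (dimvec a s)" using assms(2) by (simp add: length_dimvec)
  then show ?thesis using assms(1) unfolding fits_in_def by blast
qed

lemma strict_mono_on_atLeastAtMost_Suc:
  fixes f :: "nat \<Rightarrow> 'a::order"
  assumes "\<And>i. a \<le> i \<Longrightarrow> i < b \<Longrightarrow> f i < f (Suc i)"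
  shows "strict_mono_on {a..b} f"
proof (rule strict_mono_onI)
  fix i j assume "i \<in> {a..b}" "j \<in> {a..b}" "i < j"
  then have "Suc i \<le> j" "a \<le> i" "j \<le> b" by auto
  then show "f i < f j"
  proof (induction j rule: dec_induct)
    case base
    then show ?case using assms by simp
  next
    case (step n)
    then have "f i < f n" "f n < f (Suc n)" using assms[of n] by auto
    then show ?case by (rule order.strict_trans)
  qed
qed

lemma card_filter_ge_card_minus_1:
  assumes "finite I" and "\<And>j k. j \<in> I \<Longrightarrow> k \<in> I \<Longrightarrow> \<not> P j \<Longrightarrow> \<not> P k \<Longrightarrow> j = k"
  shows "card I - 1 \<le> card {j \<in> I. P j}"
proof -
  have "card {j \<in> I. \<not> P j} \<le> Suc 0"
    using card_le_Suc0_iff_eq[of "{j \<in> I. \<not> P j}"] assms by auto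
  moreover have "I - {j \<in> I. P j} = {j \<in> I. \<not> P j}" by blast
  then have "card {j \<in> I. \<not> P j} = card I - card {j \<in> I. P j}"
    using assms(1) card_Diff_subset[of "{j \<in> I. P j}" I] by simp
  ultimately show ?thesis by linarith
qed

theorem proposition7:
  fixes d m :: nat and A :: "nat \<Rightarrow> real list" and s t :: "nat \<Rightarrow> box_state"
  assumes "d \<ge> 1" and "m \<ge> 1"
    and boxes: "\<forall>j\<in>{1..m}. is_box d (A j)"
    and s_valid: "\<forall>j\<in>{1..m}. valid_state (A j) (s j)"
    and s_arr: "\<forall>j\<in>{1..<m}. fits_in (A j) (s j) (A (j + 1)) (s (j + 1))"
    and t_valid: "\<forall>j\<in>{1..m}. valid_state (A j) (t j)"
    and t_arr: "\<forall>j\<in>{1..<m}. fits_in (A (j + 1)) (t (j + 1)) (A j) (t j)"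
  shows "card {j \<in> {1..m}. expanded_smallest (A j) (s j) \<or> expanded_smallest (A j) (t j)} \<ge> m - 1"
proof -
  have nonempty: "A j \<noteq> []" if "j \<in> {1..m}" for j
  proof -
    have "length (A j) = d" using boxes that by (simp add: is_box_def)
    then show ?thesis using \<open>d \<ge> 1\<close> by auto
  qed
  have s_mono: "strict_mono_on {1..m} (\<lambda>j. dimvec (A j) (s j) ! 0)"
    by (rule strict_mono_on_atLeastAtMost_Suc) (use s_arr nonempty fits_in_nth_0_less in simp)
  have t_mono: "strict_mono_on {1..m} (\<lambda>j. - (dimvec (A j) (t j) ! 0))"
    by (rule strict_mono_on_atLeastAtMost_Suc) (use t_arr nonempty fits_in_nth_0_less in simp)
  have "\<not> j < k"
    if j: "j \<in> {1..m}" "\<not> (expanded_smallest (A j) (s j) \<or> expanded_smallest (A j) (t j))"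
      and k: "k \<in> {1..m}" "\<not> (expanded_smallest (A k) (s k) \<or> expanded_smallest (A k) (t k))"
    for j k
  proof
    assume "j < k"
    have "Min (set (A j)) < Min (set (A k))"
      using strict_mono_onD[OF s_mono j(1) k(1) \<open>j < k\<close>] j k nonempty s_valid
      by (intro Min_less_Min_if_nth_0_dimvec_less) auto
    moreover have "Min (set (A k)) < Min (set (A j))"
      using strict_mono_onD[OF t_mono j(1) k(1) \<open>j < k\<close>] j k nonempty t_valid
      by (intro Min_less_Min_if_nth_0_dimvec_less) auto
    ultimately show False by simp
  qed
  then have "card {1..m} - 1
      \<le> card {j \<in> {1..m}. expanded_smallest (A j) (s j) \<or> expanded_smallest (A j) (t j)}"
    by (intro card_filter_ge_card_minus_1) (simp, meson linorder_neqE_nat)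
  then show ?thesis by simp
qed

end
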